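(* Let $\mathcal{F}=\{f_i\}_{i=1}^k$ be a frame for $\mathcal{H}_n$ and let $\mathcal{S}=\{I\subseteq\{1,\dots,k\}:\operatorname{span}(\{f_i\}_{i\in I})=\mathcal{H}_n\}$. Then $\operatorname{rob}(\mathcal{F})\le\lfloor\log_2|\mathcal{S}|\rfloor$.
   Context: $\mathcal{H}_n$ is an $n$-dimensional real or complex Hilbert space. A finite sequence of vectors in $\mathcal{H}_n$ is a frame for $\mathcal{H}_n$ iff it spans $\mathcal{H}_n$. A frame $\{f_i\}_{i=1}^k$ is robust to $r$ erasures if for every index set $I\subseteq\{1,\dots,k\}$ with $|I|=r$, the sequence $\{f_i\}_{i\notin I}$ still spans $\mathcal{H}_n$. The maximum robustness $\operatorname{rob}(\mathcal{F})$ is the largest $r$ such that $\mathcal{F}$ is robust to $r$ erasures. *)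

theory Defs
  imports "HOL-Analysis.Analysis"
begin

text \<open>H_n is modelled as the coordinate space K^n = K^'n (K = real or complex),
  with the K-linear span vec.span. A finite sequence f_1,...,f_k is a function
  f :: nat => K^'n restricted to the indices {1..k}.\<close>

definition is_frame :: "(nat \<Rightarrow> 'a::field ^ 'n) \<Rightarrow> nat \<Rightarrow> bool" where
  "is_frame f k \<longleftrightarrow> vec.span (f ` {1..k}) = UNIV"

definition robust_to :: "(nat \<Rightarrow> 'a::field ^ 'n) \<Rightarrow> nat \<Rightarrow> nat \<Rightarrow> bool" where
  "robust_to f k r \<longleftrightarrow>
     (\<forall>I. I \<subseteq> {1..k} \<and> card I = r \<longrightarrow> vec.span (f ` ({1..k} - I)) = UNIV)"

definition rob :: "(nat \<Rightarrow> 'a::field ^ 'n) \<Rightarrow> nat \<Rightarrow> nat" where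
  "rob f k = (GREATEST r. r \<le> k \<and> robust_to f k r)"

definition spanning_index_sets :: "(nat \<Rightarrow> 'a::field ^ 'n) \<Rightarrow> nat \<Rightarrow> nat set set" where
  "spanning_index_sets f k = {I. I \<subseteq> {1..k} \<and> vec.span (f ` I) = UNIV}"

end

theory Submission
  imports Defs
begin

text \<open>If f survives the erasure of a fixed set J of r indices, then it also survives the
  erasure of every subset of J, since enlarging an index set only enlarges its span. Thus the
  2^r complements of subsets of J are distinct spanning index sets, and
  2^(rob f k) \<le> |S| gives the bound after taking logarithms.\<close>

lemma finite_spanning_index_sets: "finite (spanning_index_sets f k)"
  unfolding spanning_index_sets_def
  by (rule finite_subset[of _ "Pow {1..k}"]) auto

lemma spanning_index_sets_superset:
  assumes "I \<in> spanning_index_sets f k" and "I \<subseteq> J" and "J \<subseteq> {1..k}"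
  shows "J \<in> spanning_index_sets f k"
proof -
  have "vec.span (f ` I) \<subseteq> vec.span (f ` J)"
    using assms(2) by (intro vec.span_mono image_mono)
  then show ?thesis
    using assms unfolding spanning_index_sets_def by auto
qed

lemma robust_to_rob:
  assumes "is_frame f k"
  shows "rob f k \<le> k" and "robust_to f k (rob f k)"
proof -
  have robust_0: "robust_to f k 0"
    using assms unfolding robust_to_def is_frame_def
    by (metis Diff_empty card_0_eq finite_atLeastAtMost finite_subset)
  have "rob f k \<le> k \<and> robust_to f k (rob f k)"
    unfolding rob_def by (rule GreatestI_nat[where k = 0 and b = k]) (use robust_0 in auto)
  then show "rob f k \<le> k" and "robust_to f k (rob f k)" by auto
qed

lemma robust_to_imp_card_spanning_index_sets:
  assumes "robust_to f k r" and "r \<le> k"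
  shows "2 ^ r \<le> card (spanning_index_sets f k)"
proof -
  obtain J where J: "J \<subseteq> {1..k}" "card J = r"
    using assms(2) by (metis card_atLeastAtMost diff_Suc_1 obtain_subset_with_card_n)
  have "{1..k} - J \<in> spanning_index_sets f k"
    using assms(1) J unfolding robust_to_def spanning_index_sets_def by auto
  then have complements: "(\<lambda>I. {1..k} - I) ` Pow J \<subseteq> spanning_index_sets f k"
    by (auto intro: spanning_index_sets_superset)
  have "inj_on (\<lambda>I. {1..k} - I) (Pow J)"
    using J(1) by (intro inj_onI) blast
  then have "card (Pow J) \<le> card (spanning_index_sets f k)"
    using complements finite_spanning_index_sets by (rule card_inj_on_le)
  moreover have "finite J"
    using J(1) finite_subset by blast
  ultimately show ?thesis
    using J(2) by (simp add: card_Pow)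
qed

lemma le_floor_log2_of_pow_le:
  assumes "2 ^ r \<le> n"
  shows "int r \<le> \<lfloor>log 2 (real n)\<rfloor>"
proof -
  have "(2::real) ^ r \<le> real n"
    using assms by (metis of_nat_le_iff of_nat_numeral of_nat_power)
  then have "log 2 (2 ^ r) \<le> log 2 (real n)"
    by (intro log_mono) simp_all
  then show ?thesis
    by (simp add: le_floor_iff)
qed

lemma rob_le_floor_log_card_spanning_index_sets:
  fixes f :: "nat \<Rightarrow> 'a::field ^ 'n"
  assumes "is_frame f k"
  shows "int (rob f k) \<le> \<lfloor>log 2 (real (card (spanning_index_sets f k)))\<rfloor>"
  using robust_to_rob[OF assms]
  by (intro le_floor_log2_of_pow_le robust_to_imp_card_spanning_index_sets)

theorem proposition2p1:
  shows "(\<forall>(f :: nat \<Rightarrow> real ^ 'n) k. is_frame f k \<longrightarrow>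
            int (rob f k) \<le> \<lfloor>log 2 (real (card (spanning_index_sets f k)))\<rfloor>)
       \<and> (\<forall>(f :: nat \<Rightarrow> complex ^ 'n) k. is_frame f k \<longrightarrow>
            int (rob f k) \<le> \<lfloor>log 2 (real (card (spanning_index_sets f k)))\<rfloor>)"
  by (intro conjI allI impI rob_le_floor_log_card_spanning_index_sets)

end
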